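(* Let $d\ge2$. For any Lebesgue measurable set $E\subset\mathbb R^d$ with $0<|E|<\infty$, one has $(E^{\dagger\star})^\dagger=E^{\dagger\star}$ and $(E^{\dagger\star})^{\dagger\star}=E^{\dagger\star}$, where equality of sets means their symmetric difference is a Lebesgue null set.
   Context: Write $x=(x',x_d)\in\mathbb R^{d-1}\times\mathbb R$, $\omega_{d-1}$ the volume of the unit ball of $\mathbb R^{d-1}$. Schwarz symmetrization: $E^\dagger=\{(x',x_d):r(x_d)>0,\ |x'|\le r(x_d)\}$ where $r(t)\ge0$ satisfies $\omega_{d-1}r(t)^{d-1}=|\{y\in\mathbb R^{d-1}:(y,t)\in E\}|$. Steiner symmetrization: $E^\star=\{(x',t):|E^{x'}|>0,\ |t|\le\frac12|E^{x'}|\}$ where $E^{x'}=\{t\in\mathbb R:(x',t)\in E\}$. $E^{\dagger\star}=(E^\dagger)^\star$. Symmetrizations of null sets are empty. *)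

theory Defs
  imports "HOL-Analysis.Analysis"
begin

text \<open>Points of R^d are pairs (x', x_d) with x' in a Euclidean space 'a of dimension d-1
  (so d = DIM('a) + 1 \<ge> 2 automatically) and x_d real.  Lebesgue measure on 'a \<times> real
  is the product Lebesgue measure.\<close>

definition unit_ball_vol :: "'a::euclidean_space itself \<Rightarrow> real" where
  "unit_ball_vol _ = measure lebesgue (ball (0::'a) 1)"

definition hslice :: "('a \<times> real) set \<Rightarrow> real \<Rightarrow> 'a set" where
  "hslice E t = {y. (y, t) \<in> E}"

definition vslice :: "('a \<times> real) set \<Rightarrow> 'a \<Rightarrow> real set" where
  "vslice E x' = {t. (x', t) \<in> E}"

text \<open>Radius r(t) with omega_{d-1} r(t)^(d-1) = |slice|; infinite if the slice has infinite measure.\<close>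
definition schwarz_rad :: "('a::euclidean_space \<times> real) set \<Rightarrow> real \<Rightarrow> ereal" where
  "schwarz_rad E t =
     (if emeasure lebesgue (hslice E t) = \<infinity> then \<infinity>
      else ereal (root DIM('a) (measure lebesgue (hslice E t) / unit_ball_vol TYPE('a))))"

definition schwarz :: "('a::euclidean_space \<times> real) set \<Rightarrow> ('a \<times> real) set" where
  "schwarz E = (if E \<in> null_sets lebesgue then {} else
     {(x', t). schwarz_rad E t > 0 \<and> ereal (norm x') \<le> schwarz_rad E t})"

definition steiner :: "('a::euclidean_space \<times> real) set \<Rightarrow> ('a \<times> real) set" where
  "steiner E = (if E \<in> null_sets lebesgue then {} else
     {(x', t). emeasure lebesgue (vslice E x') > 0 \<and>
               ennreal \<bar>t\<bar> \<le> emeasure lebesgue (vslice E x') / 2})"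

definition ae_eq :: "('a::euclidean_space) set \<Rightarrow> 'a set \<Rightarrow> bool" where
  "ae_eq A B \<longleftrightarrow> (A - B) \<union> (B - A) \<in> null_sets lebesgue"

end

theory Submission
  imports Defs
begin

text \<open>Call a set axially decreasing if membership of \<open>(x', t)\<close> survives shrinking \<open>|x'|\<close>.
  Schwarz symmetrals are axially decreasing, and Steiner symmetrisation preserves the property
  because the vertical slices of such a set shrink as \<open>|x'|\<close> grows.  A horizontal slice of an
  axially decreasing set is either the whole space or lies between the open and the closed ball
  of some radius; its Schwarz symmetral is a ball of the same measure, hence of the same radius,
  so the two differ by a sphere, and Tonelli gives \<open>(E\<^sup>\<dagger>\<^sup>\<star>)\<^sup>\<dagger> = E\<^sup>\<dagger>\<^sup>\<star>\<close>.  Steiner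
  symmetrisation only sees the measures of the vertical slices, which a null modification of the
  set leaves unchanged almost everywhere, and it is idempotent; this gives the second identity.\<close>

subsection \<open>Slices of Lebesgue measurable sets in a product\<close>

lemma measurable_completion_AE_eq:
  assumes g: "g \<in> borel_measurable M" and ae: "AE x in M. f x = g x"
  shows "f \<in> borel_measurable (completion M)"
proof (rule measurableI)
  fix A :: "'b set" assume "A \<in> sets borel"
  then have g_sets: "g -` A \<inter> space M \<in> sets (completion M)"
    using g by (simp add: measurable_sets)
  have "AE x in completion M. x \<in> g -` A \<inter> space M \<longleftrightarrow> x \<in> f -` A \<inter> space (completion M)"
    using AE_completion[OF ae] by (rule eventually_mono) auto
  from completion.in_sets_AE[OF this g_sets]
  show "f -` A \<inter> space (completion M) \<in> sets (completion M)" by auto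
qed simp

lemma null_sets_lebesgue_Times_UNIV:
  assumes "N \<in> null_sets (lebesgue :: 'a::euclidean_space measure)"
  shows "N \<times> (UNIV :: 'b::euclidean_space set) \<in> null_sets lebesgue"
proof -
  obtain N' where N': "N' \<in> null_sets (lborel::'a measure)" "N \<subseteq> N'"
    using assms unfolding null_sets_completion_iff2 by blast
  have "N' \<times> (UNIV::'b set) \<in> null_sets (lborel \<Otimes>\<^sub>M lborel)"
    using N' by (intro lborel.times_in_null_sets1) simp_all
  then have "N' \<times> (UNIV::'b set) \<in> null_sets lebesgue"
    by (simp only: lborel_prod null_sets_completionI)
  then show ?thesis
    by (rule null_sets_completion_subset[rotated]) (use N' in blast)
qed

lemma measurable_fst_lebesgue:
  "fst \<in> (lebesgue :: ('a::euclidean_space \<times> 'b::euclidean_space) measure) \<rightarrow>\<^sub>M lebesgue"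
proof (rule completion.measurable_completion2)
  show fst_meas: "fst \<in> (lebesgue :: ('a \<times> 'b) measure) \<rightarrow>\<^sub>M lborel"
    using measurable_fst[of "lborel::'a measure" "lborel::'b measure"]
    by (simp add: lborel_prod measurable_completion)
  show "null_sets lborel \<subseteq> null_sets (distr (lebesgue :: ('a \<times> 'b) measure) lborel fst)"
  proof
    fix N :: "'a set" assume N: "N \<in> null_sets lborel"
    have "fst -` N \<inter> space lebesgue = N \<times> (UNIV :: 'b set)" by auto
    then show "N \<in> null_sets (distr (lebesgue :: ('a \<times> 'b) measure) lborel fst)"
      using null_setsD2[OF N] null_sets_lebesgue_Times_UNIV[OF null_sets_completionI[OF N]]
      by (simp add: null_sets_distr_iff[OF fst_meas])
  qed
qed

lemma measurable_swap_lebesgue: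
  "prod.swap \<in> (lebesgue :: ('a::euclidean_space \<times> 'b::euclidean_space) measure) \<rightarrow>\<^sub>M lebesgue"
proof (rule completion.measurable_completion2)
  have swap_eq: "prod.swap = (\<lambda>(x, y). (y, x))" by auto
  have swap: "prod.swap \<in> (lborel :: ('a \<times> 'b) measure) \<rightarrow>\<^sub>M lborel"
    using measurable_pair_swap'[of "lborel::'a measure" "lborel::'b measure"]
    by (simp add: lborel_prod swap_eq)
  then show "prod.swap \<in> (lebesgue :: ('a \<times> 'b) measure) \<rightarrow>\<^sub>M lborel"
    by (rule measurable_completion)
  have "(lborel \<Otimes>\<^sub>M lborel :: ('b \<times> 'a) measure) =
      distr (lborel \<Otimes>\<^sub>M lborel) (lborel \<Otimes>\<^sub>M lborel) (\<lambda>(x, y). (y, x))"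
    by (rule lborel_pair.distr_pair_swap)
  then have "distr (lebesgue :: ('a \<times> 'b) measure) lborel prod.swap = lborel"
    using swap by (simp add: distr_completion lborel_prod swap_eq)
  then show "null_sets lborel \<subseteq> null_sets (distr (lebesgue :: ('a \<times> 'b) measure) lborel prod.swap)"
    by simp
qed

lemma AE_null_sets_Pair_lborel:
  assumes "N \<in> null_sets (lborel :: ('a::euclidean_space \<times> 'b::euclidean_space) measure)"
  shows "AE x in lborel. Pair x -` N \<in> null_sets (lborel :: 'b measure)"
proof -
  have N: "N \<in> null_sets (lborel \<Otimes>\<^sub>M lborel)" using assms by (simp only: lborel_prod)
  from lborel_pair.AE_pair[OF AE_not_in[OF N]] show ?thesis
  proof (rule eventually_mono)
    fix x assume "AE y in lborel. (x, y) \<notin> N"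
    then show "Pair x -` N \<in> null_sets lborel"
      using AE_iff_null_sets[OF sets_Pair1[OF null_setsD2[OF N]]] by simp
  qed
qed

lemma emeasure_Pair_lebesgue_AE_borel:
  fixes E :: "('a::euclidean_space \<times> 'b::euclidean_space) set"
  assumes "E \<in> sets lebesgue"
  obtains g where "g \<in> borel_measurable (lborel :: 'a measure)"
    and "AE x in lborel. Pair x -` E \<in> sets (lebesgue :: 'b measure)
                        \<and> emeasure lebesgue (Pair x -` E) = g x"
proof -
  obtain S N N' where SN: "E = S \<union> N" "N \<subseteq> N'" "N' \<in> null_sets lborel" "S \<in> sets lborel"
    using assms by (rule sets_completionE)
  have S: "S \<in> sets (lborel \<Otimes>\<^sub>M lborel)" using SN(4) by (simp only: lborel_prod)
  let ?g = "\<lambda>x. emeasure (lborel :: 'b measure) (Pair x -` S)"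
  have "AE x in lborel. Pair x -` E \<in> sets lebesgue \<and> emeasure lebesgue (Pair x -` E) = ?g x"
    using AE_null_sets_Pair_lborel[OF SN(3)]
  proof (rule eventually_mono)
    fix x assume "Pair x -` N' \<in> null_sets (lborel :: 'b measure)"
    then have "Pair x -` N' \<in> null_sets lebesgue" by (rule null_sets_completionI)
    then have null: "Pair x -` N \<in> null_sets lebesgue"
      by (rule null_sets_completion_subset[rotated]) (use SN(2) in blast)
    have Sx: "Pair x -` S \<in> sets lborel" using S by (rule sets_Pair1)
    have "Pair x -` E = Pair x -` S \<union> Pair x -` N" using SN(1) by blast
    with null Sx show "Pair x -` E \<in> sets lebesgue \<and> emeasure lebesgue (Pair x -` E) = ?g x"
      by (auto simp: emeasure_Un_null_set)
  qed
  with lborel_pair.measurable_emeasure_Pair1[OF S] show thesis by (rule that)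
qed

lemma measurable_emeasure_Pair_lebesgue:
  fixes E :: "('a::euclidean_space \<times> 'b::euclidean_space) set"
  assumes "E \<in> sets lebesgue"
  shows "(\<lambda>x. emeasure (lebesgue :: 'b measure) (Pair x -` E)) \<in> borel_measurable lebesgue"
proof -
  obtain g where g: "g \<in> borel_measurable lborel"
    and ae: "AE x in lborel. Pair x -` E \<in> sets lebesgue \<and> emeasure lebesgue (Pair x -` E) = g x"
    using emeasure_Pair_lebesgue_AE_borel[OF assms] by blast
  show ?thesis
    by (rule measurable_completion_AE_eq[OF g]) (use ae in \<open>rule eventually_mono, blast\<close>)
qed

lemma AE_sets_Pair_lebesgue:
  fixes E :: "('a::euclidean_space \<times> 'b::euclidean_space) set"
  assumes "E \<in> sets lebesgue"
  shows "AE x in lebesgue. Pair x -` E \<in> sets (lebesgue :: 'b measure)"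
proof -
  obtain g where "AE x in lborel. Pair x -` E \<in> sets (lebesgue :: 'b measure)
                    \<and> emeasure lebesgue (Pair x -` E) = g x"
    using emeasure_Pair_lebesgue_AE_borel[OF assms] by blast
  then show ?thesis by (auto elim!: AE_completion eventually_mono)
qed

lemma measurable_emeasure_Pair2_lebesgue:
  fixes E :: "('a::euclidean_space \<times> 'b::euclidean_space) set"
  assumes "E \<in> sets lebesgue"
  shows "(\<lambda>y. emeasure (lebesgue :: 'a measure) ((\<lambda>x. (x, y)) -` E)) \<in> borel_measurable lebesgue"
proof -
  have "prod.swap -` E \<in> sets lebesgue"
    using measurable_sets[OF measurable_swap_lebesgue assms] by simp
  moreover have "(\<lambda>x. (x, y)) -` E = Pair y -` (prod.swap -` E)" for y by auto
  ultimately show ?thesis by (simp add: measurable_emeasure_Pair_lebesgue)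
qed

lemma AE_null_sets_Pair_lebesgue:
  fixes N :: "('a::euclidean_space \<times> 'b::euclidean_space) set"
  assumes "N \<in> null_sets lebesgue"
  shows "AE x in lebesgue. Pair x -` N \<in> null_sets (lebesgue :: 'b measure)"
proof -
  obtain N' where N': "N' \<in> null_sets lborel" "N \<subseteq> N'"
    using assms unfolding null_sets_completion_iff2 by blast
  have "AE x in lborel. Pair x -` N \<in> null_sets (lebesgue :: 'b measure)"
    using AE_null_sets_Pair_lborel[OF N'(1)]
  proof (rule eventually_mono)
    fix x assume "Pair x -` N' \<in> null_sets (lborel :: 'b measure)"
    then have "Pair x -` N' \<in> null_sets lebesgue" by (rule null_sets_completionI)
    then show "Pair x -` N \<in> null_sets lebesgue"
      by (rule null_sets_completion_subset[rotated]) (use N'(2) in blast)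
  qed
  then show ?thesis by (rule AE_completion)
qed

lemma null_sets_lebesgueI_Pair2:
  fixes D :: "('a::euclidean_space \<times> 'b::euclidean_space) set"
  assumes D: "D \<in> sets lebesgue"
    and null: "\<And>y. (\<lambda>x. (x, y)) -` D \<in> null_sets (lebesgue :: 'a measure)"
  shows "D \<in> null_sets lebesgue"
proof -
  obtain S N N' where SN: "D = S \<union> N" "N \<subseteq> N'" "N' \<in> null_sets lborel" "S \<in> sets lborel"
    using D by (rule sets_completionE)
  have S: "S \<in> sets (lborel \<Otimes>\<^sub>M lborel)" using SN(4) by (simp only: lborel_prod)
  have "emeasure (lborel :: 'a measure) ((\<lambda>x. (x, y)) -` S) = 0" for y
  proof -
    have "(\<lambda>x. (x, y)) -` S \<in> null_sets (lebesgue :: 'a measure)"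
      by (rule null_sets_completion_subset[OF _ null]) (use SN(1) in blast)
    then show ?thesis
      using null_sets_completion_iff[OF sets_Pair2[OF S]] by (simp add: null_setsD1)
  qed
  then have "emeasure (lborel \<Otimes>\<^sub>M lborel) S = 0"
    by (simp add: lborel_pair.emeasure_pair_measure_alt2[OF S])
  then have "S \<in> null_sets lborel"
    using SN(4) by (simp add: null_sets_def lborel_prod)
  then have "S \<union> N' \<in> null_sets lborel"
    using SN(3) by (rule null_sets.Un)
  then show ?thesis
    by (rule null_sets_completion_subset[OF _ null_sets_completionI, rotated]) (use SN(1,2) in blast)
qed

lemma measurable_snd_lebesgue:
  "snd \<in> (lebesgue :: ('a::euclidean_space \<times> 'b::euclidean_space) measure) \<rightarrow>\<^sub>M lebesgue"
  using measurable_comp[OF measurable_swap_lebesgue measurable_fst_lebesgue]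
  by (simp add: comp_def)

subsection \<open>Equality almost everywhere\<close>

lemma ae_eq_sym: "ae_eq A B \<Longrightarrow> ae_eq B A"
  unfolding ae_eq_def by (simp add: Un_commute)

lemma ae_eq_trans:
  assumes "ae_eq A B" "ae_eq B C"
  shows "ae_eq A C"
proof -
  have "(A - C) \<union> (C - A) \<subseteq> ((A - B) \<union> (B - A)) \<union> ((B - C) \<union> (C - B))" by blast
  with assms show ?thesis
    unfolding ae_eq_def by (metis null_sets.Un null_sets_completion_subset)
qed

lemma ae_eq_null_sets:
  assumes "ae_eq A B" "A \<in> null_sets lebesgue"
  shows "B \<in> null_sets lebesgue"
proof -
  have "B \<subseteq> A \<union> ((A - B) \<union> (B - A))" by blast
  with assms show ?thesis
    unfolding ae_eq_def by (metis null_sets.Un null_sets_completion_subset)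
qed

lemma ae_eq_emeasure:
  assumes "ae_eq A B" and A: "A \<in> sets lebesgue"
  shows "B \<in> sets lebesgue" and "emeasure lebesgue A = emeasure lebesgue B"
proof -
  have ae: "AE x in lebesgue. x \<in> A \<longleftrightarrow> x \<in> B"
    using AE_not_in[OF assms(1)[unfolded ae_eq_def]] by (rule eventually_mono) blast
  show B: "B \<in> sets lebesgue" using completion.in_sets_AE[OF ae A] by simp
  show "emeasure lebesgue A = emeasure lebesgue B" using ae A B by (rule emeasure_eq_AE)
qed

lemma ae_eq_between_ball_cball:
  fixes A B :: "'a::euclidean_space set"
  assumes "ball 0 \<rho> \<subseteq> A" "A \<subseteq> cball 0 \<rho>" "ball 0 \<rho> \<subseteq> B" "B \<subseteq> cball 0 \<rho>"
  shows "ae_eq A B"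
proof -
  have "(A - B) \<union> (B - A) \<subseteq> sphere 0 \<rho>"
  proof
    fix x assume "x \<in> (A - B) \<union> (B - A)"
    then have "x \<in> cball 0 \<rho>" "x \<notin> ball 0 \<rho>" using assms by blast+
    then show "x \<in> sphere 0 \<rho>" by simp
  qed
  moreover have "sphere (0::'a) \<rho> \<in> null_sets lebesgue"
    using negligible_sphere negligible_iff_null_sets by blast
  ultimately show ?thesis unfolding ae_eq_def by (rule null_sets_completion_subset)
qed

lemma emeasure_between_ball_cball:
  fixes A :: "'a::euclidean_space set"
  assumes "0 \<le> \<rho>" "ball 0 \<rho> \<subseteq> A" "A \<subseteq> cball 0 \<rho>"
  shows "emeasure lebesgue A = ennreal (\<rho> ^ DIM('a) * unit_ball_vol TYPE('a))"
proof -
  have "ae_eq (ball 0 \<rho>) A"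
    using assms(2,3) by (rule ae_eq_between_ball_cball[OF order_refl ball_subset_cball])
  from ae_eq_emeasure(2)[OF this]
  have "emeasure lebesgue A = emeasure lborel (ball (0::'a) \<rho>)" by simp
  also have "\<dots> = ennreal (measure lborel (ball (0::'a) \<rho>))"
    using emeasure_lborel_ball_finite[of "0::'a" \<rho>] by (simp add: emeasure_eq_ennreal_measure)
  finally show ?thesis
    using content_ball_conv_unit_ball[OF assms(1), of "0::'a"] by (simp add: unit_ball_vol_def)
qed

lemma radial_set_cases:
  fixes A :: "'a::euclidean_space set"
  assumes radial: "\<And>x z. x \<in> A \<Longrightarrow> norm z \<le> norm x \<Longrightarrow> z \<in> A"
  obtains "A = UNIV" | \<rho> where "0 \<le> \<rho>" "ball 0 \<rho> \<subseteq> A" "A \<subseteq> cball 0 \<rho>"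
proof -
  consider "\<not> bounded A" | "A = {}" | "bounded A" "A \<noteq> {}" by blast
  then show thesis
  proof cases
    case 1
    have "z \<in> A" for z
    proof -
      obtain x where "x \<in> A" "norm z < norm x"
        using 1 unfolding bounded_iff by (meson not_le)
      then show ?thesis using radial by (meson less_imp_le)
    qed
    then show thesis using that(1) by blast
  next
    case 2
    then show thesis using that(2)[of 0] by simp
  next
    case 3
    define \<rho> where "\<rho> = Sup (norm ` A)"
    have bdd: "bdd_above (norm ` A)" using 3 by (meson bdd_above_norm)
    have upper: "norm x \<le> \<rho>" if "x \<in> A" for x
      unfolding \<rho>_def using bdd that by (intro cSup_upper) auto
    have "ball 0 \<rho> \<subseteq> A"
    proof
      fix z :: 'a assume "z \<in> ball 0 \<rho>"
      then have "norm z < Sup (norm ` A)" by (simp add: \<rho>_def)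
      then obtain x where "x \<in> A" "norm z < norm x"
        using less_cSup_iff[OF _ bdd] 3 by auto
      then show "z \<in> A" using radial by (meson less_imp_le)
    qed
    moreover have "A \<subseteq> cball 0 \<rho>" using upper by auto
    moreover have "0 \<le> \<rho>" using 3 upper by (meson ex_in_conv norm_ge_zero order_trans)
    ultimately show thesis using that(2) by blast
  qed
qed

subsection \<open>Schwarz and Steiner symmetrisation\<close>

lemma hslice_vimage: "hslice E t = (\<lambda>x. (x, t)) -` E"
  by (auto simp: hslice_def)

lemma vslice_vimage: "vslice E x = Pair x -` E"
  by (auto simp: vslice_def)

lemma measurable_schwarz_rad:
  fixes E :: "('a::euclidean_space \<times> real) set"
  assumes "E \<in> sets lebesgue"
  shows "schwarz_rad E \<in> borel_measurable lebesgue"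
proof -
  have [measurable]: "(\<lambda>t. emeasure (lebesgue :: 'a measure) (hslice E t)) \<in> borel_measurable lebesgue"
    unfolding hslice_vimage by (rule measurable_emeasure_Pair2_lebesgue[OF assms])
  have "schwarz_rad E = (\<lambda>t. if emeasure lebesgue (hslice E t) = \<infinity> then \<infinity>
      else ereal (root DIM('a) (enn2real (emeasure lebesgue (hslice E t)) / unit_ball_vol TYPE('a))))"
    by (simp add: fun_eq_iff schwarz_rad_def measure_def)
  also have "\<dots> \<in> borel_measurable lebesgue" by measurable
  finally show ?thesis .
qed

lemma sets_lebesgue_schwarz:
  fixes E :: "('a::euclidean_space \<times> real) set"
  assumes "E \<in> sets lebesgue"
  shows "schwarz E \<in> sets lebesgue"
proof -
  have [measurable]: "(\<lambda>p. schwarz_rad E (snd p)) \<in> borel_measurable (lebesgue :: ('a \<times> real) measure)"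
    using measurable_compose[OF measurable_snd_lebesgue measurable_schwarz_rad[OF assms]] .
  have [measurable]: "(\<lambda>p. norm (fst p)) \<in> borel_measurable (lebesgue :: ('a \<times> real) measure)"
    using continuous_imp_measurable_on_sets_lebesgue[of UNIV "\<lambda>p :: 'a \<times> real. norm (fst p)"]
    by (simp add: lebesgue_on_UNIV_eq continuous_intros)
  have "{p \<in> space lebesgue. 0 < schwarz_rad E (snd p) \<and> ereal (norm (fst p)) \<le> schwarz_rad E (snd p)}
          \<in> sets (lebesgue :: ('a \<times> real) measure)"
    by measurable
  then show ?thesis by (auto simp: schwarz_def case_prod_unfold)
qed

lemma sets_lebesgue_steiner:
  fixes E :: "('a::euclidean_space \<times> real) set"
  assumes "E \<in> sets lebesgue"
  shows "steiner E \<in> sets lebesgue"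
proof -
  have [measurable]: "(\<lambda>p. emeasure (lebesgue :: real measure) (vslice E (fst p)))
      \<in> borel_measurable (lebesgue :: ('a \<times> real) measure)"
    using measurable_compose[OF measurable_fst_lebesgue measurable_emeasure_Pair_lebesgue[OF assms]]
    by (simp add: vslice_vimage)
  have [measurable]: "(\<lambda>p. \<bar>snd p\<bar>) \<in> borel_measurable (lebesgue :: ('a \<times> real) measure)"
    using continuous_imp_measurable_on_sets_lebesgue[of UNIV "\<lambda>p :: 'a \<times> real. \<bar>snd p\<bar>"]
    by (simp add: lebesgue_on_UNIV_eq continuous_intros)
  have "{p \<in> space lebesgue. 0 < emeasure lebesgue (vslice E (fst p))
            \<and> ennreal \<bar>snd p\<bar> \<le> emeasure lebesgue (vslice E (fst p)) / 2}
          \<in> sets (lebesgue :: ('a \<times> real) measure)"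
    by measurable
  then show ?thesis by (auto simp: steiner_def case_prod_unfold)
qed

definition axially_decreasing :: "('a::real_normed_vector \<times> real) set \<Rightarrow> bool" where
  "axially_decreasing E \<longleftrightarrow> (\<forall>x z t. (x, t) \<in> E \<longrightarrow> norm z \<le> norm x \<longrightarrow> (z, t) \<in> E)"

lemma axially_decreasing_schwarz: "axially_decreasing (schwarz E)"
  unfolding axially_decreasing_def schwarz_def by (auto elim: order_trans[rotated])

lemma sets_lebesgue_vslice_schwarz:
  fixes E :: "('a::euclidean_space \<times> real) set"
  assumes "E \<in> sets lebesgue"
  shows "vslice (schwarz E) x \<in> sets lebesgue"
proof -
  note [measurable] = measurable_schwarz_rad[OF assms]
  have "{t \<in> space lebesgue. 0 < schwarz_rad E t \<and> ereal (norm x) \<le> schwarz_rad E t} \<in> sets lebesgue"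
    by measurable
  then show ?thesis by (auto simp: vslice_def schwarz_def)
qed

lemma vslice_steiner:
  "E \<notin> null_sets lebesgue \<Longrightarrow> vslice (steiner E) x =
     {t. 0 < emeasure lebesgue (vslice E x) \<and> ennreal \<bar>t\<bar> \<le> emeasure lebesgue (vslice E x) / 2}"
  by (simp add: steiner_def vslice_def)

lemma emeasure_centered_interval:
  "emeasure (lebesgue :: real measure) {t. 0 < m \<and> ennreal \<bar>t\<bar> \<le> m / 2} = m"
proof (cases m)
  case (real c)
  show ?thesis
  proof (cases "c > 0")
    case True
    then have "{t. 0 < m \<and> ennreal \<bar>t\<bar> \<le> m / 2} = {- (c / 2) .. c / 2}"
      by (auto simp: real ennreal_divide_numeral ennreal_le_iff)
    with True real show ?thesis by simp
  next
    case False
    with real show ?thesis by (simp add: ennreal_eq_0_iff)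
  qed
next
  case top
  then show ?thesis by (simp add: ennreal_top_divide)
qed

text \<open>The slices must be measurable: \<open>emeasure\<close> vanishes on non-measurable sets, so it is not
  monotone on arbitrary sets.\<close>

lemma axially_decreasing_steiner:
  assumes "\<And>x. vslice F x \<in> sets lebesgue" and "axially_decreasing F"
  shows "axially_decreasing (steiner F)"
proof -
  have mono: "emeasure lebesgue (vslice F x) \<le> emeasure lebesgue (vslice F z)" if "norm z \<le> norm x" for x z
    using assms that by (intro emeasure_mono) (auto simp: vslice_def axially_decreasing_def)
  show ?thesis
    unfolding axially_decreasing_def steiner_def
    by (auto dest!: mono intro: order_trans divide_right_mono_ennreal)
qed

lemma ae_eq_steiner_steiner: "ae_eq (steiner (steiner F)) (steiner F)"
proof (cases "steiner F \<in> null_sets lebesgue")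
  case True
  then show ?thesis by (simp add: steiner_def[of "steiner F"] ae_eq_def)
next
  case False
  then have "F \<notin> null_sets lebesgue" by (auto simp: steiner_def)
  then have "emeasure lebesgue (vslice (steiner F) x) = emeasure lebesgue (vslice F x)" for x
    by (simp add: vslice_steiner emeasure_centered_interval)
  then have "steiner (steiner F) = steiner F"
    using False \<open>F \<notin> null_sets lebesgue\<close> by (simp add: steiner_def)
  then show ?thesis by (simp add: ae_eq_def)
qed

lemma steiner_ae_eq_cong:
  fixes A B :: "('a::euclidean_space \<times> real) set"
  assumes A: "A \<in> sets lebesgue" and AB: "ae_eq A B"
  shows "ae_eq (steiner A) (steiner B)"
proof (cases "A \<in> null_sets lebesgue")
  case True
  then have "B \<in> null_sets lebesgue" by (rule ae_eq_null_sets[OF AB])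
  with True show ?thesis by (simp add: steiner_def ae_eq_def)
next
  case False
  then have B: "B \<notin> null_sets lebesgue" using ae_eq_null_sets[OF ae_eq_sym[OF AB]] by blast
  have "AE x in lebesgue. emeasure lebesgue (vslice A x) = emeasure lebesgue (vslice B x)"
    using AE_sets_Pair_lebesgue[OF A] AE_null_sets_Pair_lebesgue[OF AB[unfolded ae_eq_def]]
  proof eventually_elim
    case (elim x)
    then have "ae_eq (Pair x -` A) (Pair x -` B)" by (simp add: ae_eq_def vimage_Un vimage_Diff)
    then show ?case using elim(1) unfolding vslice_vimage by (rule ae_eq_emeasure(2))
  qed
  then obtain N where N: "N \<in> null_sets lebesgue"
    and eq: "\<And>x. x \<notin> N \<Longrightarrow> emeasure lebesgue (vslice A x) = emeasure lebesgue (vslice B x)"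
    by (auto elim: AE_E3)
  have "(steiner A - steiner B) \<union> (steiner B - steiner A) \<subseteq> N \<times> UNIV"
    using eq False B by (auto simp: steiner_def)
  then show ?thesis
    unfolding ae_eq_def by (rule null_sets_completion_subset[OF _ null_sets_lebesgue_Times_UNIV[OF N]])
qed

lemma hslice_schwarz:
  "E \<notin> null_sets lebesgue \<Longrightarrow>
     hslice (schwarz E) t = {x. 0 < schwarz_rad E t \<and> ereal (norm x) \<le> schwarz_rad E t}"
  by (simp add: schwarz_def hslice_def)

lemma schwarz_rad_eq_infinity: "hslice E t = UNIV \<Longrightarrow> schwarz_rad E t = \<infinity>"
  by (simp add: schwarz_rad_def)

lemma schwarz_rad_eq_radius:
  fixes E :: "('a::euclidean_space \<times> real) set"
  assumes "0 \<le> \<rho>" "ball 0 \<rho> \<subseteq> hslice E t" "hslice E t \<subseteq> cball 0 \<rho>"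
  shows "schwarz_rad E t = ereal \<rho>"
proof -
  let ?\<omega> = "unit_ball_vol TYPE('a)"
  have "?\<omega> > 0" unfolding unit_ball_vol_def using content_ball_pos[of 1 "0::'a"] by simp
  have "emeasure lebesgue (hslice E t) = ennreal (\<rho> ^ DIM('a) * ?\<omega>)"
    using assms by (rule emeasure_between_ball_cball)
  with \<open>?\<omega> > 0\<close> \<open>0 \<le> \<rho>\<close> show ?thesis
    by (simp add: schwarz_rad_def measure_def real_root_power_cancel)
qed

lemma schwarz_ae_eq_self:
  fixes G :: "('a::euclidean_space \<times> real) set"
  assumes G: "G \<in> sets lebesgue" and dec: "axially_decreasing G"
  shows "ae_eq (schwarz G) G"
proof (cases "G \<in> null_sets lebesgue")
  case True
  then show ?thesis by (simp add: ae_eq_def schwarz_def)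
next
  case False
  have "ae_eq (hslice (schwarz G) t) (hslice G t)" for t
  proof -
    have "\<And>x z. x \<in> hslice G t \<Longrightarrow> norm z \<le> norm x \<Longrightarrow> z \<in> hslice G t"
      using dec by (auto simp: axially_decreasing_def hslice_def)
    then consider "hslice G t = UNIV"
      | \<rho> where "0 \<le> \<rho>" "ball 0 \<rho> \<subseteq> hslice G t" "hslice G t \<subseteq> cball 0 \<rho>"
      by (rule radial_set_cases)
    then show ?thesis
    proof cases
      case 1
      then show ?thesis using False by (simp add: hslice_schwarz schwarz_rad_eq_infinity ae_eq_def)
    next
      case (2 \<rho>)
      then have "schwarz_rad G t = ereal \<rho>" by (rule schwarz_rad_eq_radius)
      then have "ball 0 \<rho> \<subseteq> hslice (schwarz G) t" "hslice (schwarz G) t \<subseteq> cball 0 \<rho>"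
        using False by (auto simp: hslice_schwarz intro: le_less_trans[OF norm_ge_zero])
      with 2 show ?thesis by (intro ae_eq_between_ball_cball)
    qed
  qed
  then show ?thesis
    unfolding ae_eq_def using sets_lebesgue_schwarz[OF G] G
    by (intro null_sets_lebesgueI_Pair2) (auto simp: hslice_vimage vimage_Un vimage_Diff)
qed

theorem lemma4p3:
  fixes E :: "('a::euclidean_space \<times> real) set"
  assumes "E \<in> sets lebesgue"
    and "0 < emeasure lebesgue E" and "emeasure lebesgue E < \<infinity>"
  shows "ae_eq (schwarz (steiner (schwarz E))) (steiner (schwarz E))
       \<and> ae_eq (steiner (schwarz (steiner (schwarz E)))) (steiner (schwarz E))"
proof -
  define G where "G = steiner (schwarz E)"
  have G: "G \<in> sets lebesgue"
    unfolding G_def using assms(1) by (intro sets_lebesgue_steiner sets_lebesgue_schwarz)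
  have "axially_decreasing G"
    unfolding G_def using assms(1)
    by (intro axially_decreasing_steiner axially_decreasing_schwarz sets_lebesgue_vslice_schwarz)
  with G have schwarz_G: "ae_eq (schwarz G) G" by (rule schwarz_ae_eq_self)
  have "ae_eq (steiner (schwarz G)) (steiner G)"
    using sets_lebesgue_schwarz[OF G] schwarz_G by (rule steiner_ae_eq_cong)
  then have "ae_eq (steiner (schwarz G)) G"
    using ae_eq_steiner_steiner[of "schwarz E"] unfolding G_def by (rule ae_eq_trans)
  with schwarz_G show ?thesis unfolding G_def by simp
qed

end
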